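(* Let $m \ge 1$ and $n \ge 2m+2$ be integers. Then for every real $r$ with $|r|<1$, $$\int_{-1}^1 \frac{T_n(s)(1-s^2)^{m-\frac{1}{2}}}{(s-r)^3}\,ds = (-1)^{m+1}\left(\frac{1}{2}\right)^{2m+1}\frac{\pi}{1-r^2}\sum_{j=0}^{2m-1}(-1)^j\binom{2m-1}{j}(n+1-2m+2j)\Big[(n+2-2m+2j)U_{n-1-2m+2j}(r)-(n-2m+2j)U_{n+1-2m+2j}(r)\Big],$$ where the integral is a Hadamard finite-part integral.
   Context: $T_k(s)=\cos(k\cos^{-1}s)$ and $U_k(s)=\frac{\sin((k+1)\cos^{-1}s)}{\sin(\cos^{-1}s)}$ are the Tchebyshev polynomials of the first and second kinds. For a positive integer $\alpha\ge 2$ and $|r|<1$, the integral $\int_{-1}^1 \frac{D(s)}{(s-r)^\alpha}ds$ is understood in the Hadamard finite-part sense; in particular it satisfies $\int_{-1}^1 \frac{D(s)}{(s-r)^{\alpha}}ds=\frac{1}{\alpha-1}\frac{d}{dr}\int_{-1}^1\frac{D(s)}{(s-r)^{\alpha-1}}ds$, where for $\alpha-1=1$ the right-hand integral is a Cauchy principal value. $\binom{a}{j}=\frac{a!}{j!(a-j)!}$. *)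

theory Defs
  imports "HOL-Analysis.Analysis"
begin

definition chebT :: "nat \<Rightarrow> real \<Rightarrow> real" where
  "chebT k s = cos (real k * arccos s)"

definition chebU :: "nat \<Rightarrow> real \<Rightarrow> real" where
  "chebU k s = sin ((real k + 1) * arccos s) / sin (arccos s)"

definition cpv :: "(real \<Rightarrow> real) \<Rightarrow> real \<Rightarrow> real" where
  "cpv D r = Lim (at_right 0)
     (\<lambda>e. integral {-1..r - e} (\<lambda>s. D s / (s - r)) + integral {r + e..1} (\<lambda>s. D s / (s - r)))"

fun hadamard_fp :: "(real \<Rightarrow> real) \<Rightarrow> nat \<Rightarrow> real \<Rightarrow> real" where
  "hadamard_fp D 0 r = integral {-1..1} D"
| "hadamard_fp D (Suc 0) r = cpv D r"
| "hadamard_fp D (Suc (Suc k)) r = (1 / real (Suc k)) * deriv (hadamard_fp D (Suc k)) r"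

end

theory Submission
  imports Defs
begin

(*
  With s = cos t the density T_n(s) (1 - s^2)^(m - 1/2) equals sin^(2m-1) t cos (n t), and repeated
  product-to-sum turns it into an alternating binomial combination of sin (k t) = sin (k arccos s),
  k = n + 1 - 2m + 2j.  The principal value of sin (k arccos s) / (s - x) over [-1, 1] is
  -pi T_k(x) (Glauert's integral): for k = 1 via an explicit primitive, and for larger k by the
  recurrence sin ((k+2) t) + sin (k t) = 2 cos t sin ((k+1) t), which brings in the integral of
  sin ((k+1) arccos s), equal to pi/2 for k = 0 and to 0 otherwise.  So on (-1, 1) the Cauchy
  principal value is a finite combination of Chebyshev polynomials, and the finite-part integral of
  order 3 is half its second derivative, computed from T_k' = k U_(k-1) and
  (1 - y^2) U_(k-1)' = y U_(k-1) - k T_k.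
*)

definition binom_diff :: "nat \<Rightarrow> (real \<Rightarrow> real) \<Rightarrow> real \<Rightarrow> real" where
  "binom_diff M h v = (\<Sum>j\<le>M. (-1)^j * real (M choose j) * h (v - real M + 2 * real j))"

lemma binom_diff_0 [simp]: "binom_diff 0 h v = h v"
  by (simp add: binom_diff_def)

lemma binom_diff_Suc: "binom_diff (Suc M) h v = binom_diff M h (v - 1) - binom_diff M h (v + 1)"
proof -
  define S where "S = (\<lambda>i. (-1)^Suc i * real (M choose Suc i) * h (v + 1 - real M + 2 * real i))"
  define S' where "S' = (\<lambda>i. (-1)^i * real (M choose i) * h (v + 1 - real M + 2 * real i))"
  have left: "binom_diff M h (v - 1) = h (v - 1 - real M) + (\<Sum>i\<le>M. S i)"
  proof -
    have "binom_diff M h (v - 1)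
        = (\<Sum>j\<le>Suc M. (-1)^j * real (M choose j) * h (v - 1 - real M + 2 * real j))"
      unfolding binom_diff_def by (simp add: algebra_simps)
    also have "\<dots> = h (v - 1 - real M) + (\<Sum>i\<le>M. S i)"
      unfolding S_def by (subst sum.atMost_Suc_shift) (simp add: algebra_simps)
    finally show ?thesis .
  qed
  have right: "binom_diff M h (v + 1) = (\<Sum>i\<le>M. S' i)"
    unfolding binom_diff_def S'_def by (simp add: algebra_simps)
  have "binom_diff (Suc M) h v = h (v - 1 - real M) + (\<Sum>i\<le>M. S i - S' i)"
    unfolding binom_diff_def S_def S'_def
    by (subst sum.atMost_Suc_shift) (auto simp: algebra_simps intro!: sum.cong)
  then show ?thesis
    unfolding left right sum_subtractf by simp
qed

lemma sin_power_mult_cos: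
  "sin t ^ M * cos (v * t) = (-1)^M / 2^M * binom_diff M (\<lambda>b. cos (b * t - real M * pi / 2)) v"
proof (induction M arbitrary: v)
  case 0
  then show ?case by simp
next
  case (Suc M)
  define H where "H = (\<lambda>b. cos (b * t - real (Suc M) * pi / 2))"
  have product: "sin t * cos (b * t - real M * pi / 2) = (H (b + 1) - H (b - 1)) / 2" for b
  proof -
    define u where "u = b * t - real M * pi / 2"
    have "H (b + 1) = cos ((u + t) - pi / 2)" "H (b - 1) = cos ((u - t) - pi / 2)"
      unfolding H_def u_def by (simp_all add: algebra_simps add_divide_distrib)
    then have "H (b + 1) = sin (u + t)" "H (b - 1) = sin (u - t)"
      by (simp_all add: cos_diff)
    then show ?thesis
      unfolding u_def by (simp add: sin_add sin_diff)
  qed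
  have "sin t ^ Suc M * cos (v * t) = sin t * (sin t ^ M * cos (v * t))"
    by simp
  also have "\<dots> = (-1)^M / 2^M * binom_diff M (\<lambda>b. sin t * cos (b * t - real M * pi / 2)) v"
    unfolding Suc.IH binom_diff_def by (simp add: sum_distrib_left algebra_simps)
  also have "\<dots> = (-1)^M / 2^M * ((binom_diff M H (v + 1) - binom_diff M H (v - 1)) / 2)"
    unfolding product binom_diff_def
    by (simp add: sum_divide_distrib sum_subtractf[symmetric] algebra_simps)
  also have "\<dots> = (-1)^Suc M / 2^Suc M * binom_diff (Suc M) H v"
    by (simp add: binom_diff_Suc field_simps)
  finally show ?case
    unfolding H_def .
qed

lemma powr_half_odd_eq_sqrt_power:
  assumes "0 \<le> y" "m \<ge> 1"
  shows "y powr (real m - 1/2) = sqrt y ^ (2 * m - 1)"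
proof (cases "y = 0")
  case True
  then show ?thesis using assms by simp
next
  case False
  then have "sqrt y ^ (2 * m - 1) = y powr (real (2 * m - 1) * (1/2))"
    using assms by (simp add: powr_half_sqrt[symmetric] powr_power)
  also have "real (2 * m - 1) * (1/2) = real m - 1/2"
    using assms by (simp add: of_nat_diff)
  finally show ?thesis by simp
qed

lemma chebT_mult_weight_expansion:
  assumes "m \<ge> 1" "2 * m \<le> n + 1" "\<bar>s\<bar> \<le> 1"
  shows "chebT n s * (1 - s\<^sup>2) powr (real m - 1/2) =
    (-1)^m / 2^(2 * m - 1) * (\<Sum>j = 0..2 * m - 1. (-1)^j * real ((2 * m - 1) choose j) *
       sin (real (n + 1 - 2 * m + 2 * j) * arccos s))"
proof -
  define M where "M = 2 * m - 1"
  define t where "t = arccos s"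
  have M_odd: "M = Suc (2 * (m - 1))"
    unfolding M_def using assms by simp
  have "(1 - s\<^sup>2) powr (real m - 1/2) = sin t ^ M"
    unfolding t_def M_def using assms
    by (simp add: sin_arccos powr_half_odd_eq_sqrt_power abs_square_le_1)
  then have "chebT n s * (1 - s\<^sup>2) powr (real m - 1/2) = sin t ^ M * cos (real n * t)"
    unfolding chebT_def t_def by simp
  also have "\<dots> = - binom_diff M (\<lambda>b. cos (b * t - real M * pi / 2)) (real n) / 2^M"
    unfolding sin_power_mult_cos by (simp add: M_odd)
  also have "binom_diff M (\<lambda>b. cos (b * t - real M * pi / 2)) (real n)
      = binom_diff M (\<lambda>b. - ((-1)^m * sin (b * t))) (real n)"
  proof -
    have "cos (b * t - real M * pi / 2) = - ((-1)^m * sin (b * t))" for b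
    proof -
      have shift: "b * t - real M * pi / 2 = (b * t - real m * pi) + pi / 2"
        unfolding M_def using assms by (simp add: of_nat_diff field_simps)
      show ?thesis
        unfolding shift by (simp add: cos_add sin_diff)
    qed
    then show ?thesis by simp
  qed
  also have "\<dots> = - ((-1)^m * (\<Sum>j = 0..M. (-1)^j * real (M choose j) *
      sin (real (n + 1 - 2 * m + 2 * j) * t)))"
    unfolding binom_diff_def atLeast0AtMost M_def using assms
    by (simp add: sum_distrib_left sum_negf of_nat_diff algebra_simps)
  finally show ?thesis
    unfolding M_def t_def by simp
qed

definition pv_trunc :: "(real \<Rightarrow> real) \<Rightarrow> real \<Rightarrow> real \<Rightarrow> real" where
  "pv_trunc D x e =
     integral {-1..x - e} (\<lambda>s. D s / (s - x)) + integral {x + e..1} (\<lambda>s. D s / (s - x))"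

lemma cpv_eqI:
  assumes "(pv_trunc D x \<longlongrightarrow> L) (at_right 0)"
  shows "cpv D x = L"
proof -
  have "cpv D x = Lim (at_right 0) (pv_trunc D x)"
    unfolding cpv_def pv_trunc_def ..
  also have "\<dots> = L"
    using assms by (rule tendsto_Lim[OF trivial_limit_at_right_real])
  finally show ?thesis .
qed

lemma integrable_on_div_sub:
  fixes g :: "real \<Rightarrow> real"
  assumes "continuous_on {-1..1} g" "-1 \<le> a" "b \<le> 1" "x \<notin> {a..b}"
  shows "(\<lambda>s. g s / (s - x)) integrable_on {a..b}"
proof (rule integrable_continuous_interval)
  have "continuous_on {a..b} g"
    using assms(1) by (rule continuous_on_subset) (use assms in auto)
  then show "continuous_on {a..b} (\<lambda>s. g s / (s - x))"
    using assms(4) by (intro continuous_intros) auto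
qed

lemma pv_trunc_linear:
  assumes f: "continuous_on {-1..1} f" and g: "continuous_on {-1..1} g"
    and h: "\<And>s. s \<in> {-1..1} \<Longrightarrow> h s = a * f s + b * g s"
    and x: "\<bar>x\<bar> < 1" and e: "0 < e"
  shows "pv_trunc h x e = a * pv_trunc f x e + b * pv_trunc g x e"
proof -
  have piece: "integral {c..d} (\<lambda>s. h s / (s - x))
      = a * integral {c..d} (\<lambda>s. f s / (s - x)) + b * integral {c..d} (\<lambda>s. g s / (s - x))"
    if cd: "-1 \<le> c" "d \<le> 1" "x \<notin> {c..d}" for c d
  proof -
    have "integral {c..d} (\<lambda>s. h s / (s - x))
        = integral {c..d} (\<lambda>s. a * (f s / (s - x)) + b * (g s / (s - x)))"
      using cd by (intro integral_cong) (simp add: h add_divide_distrib)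
    also have "\<dots> = integral {c..d} (\<lambda>s. a * (f s / (s - x)))
        + integral {c..d} (\<lambda>s. b * (g s / (s - x)))"
      using cd by (intro integral_add integrable_on_mult_right integrable_on_div_sub f g)
    also have "\<dots> = a * integral {c..d} (\<lambda>s. f s / (s - x))
        + b * integral {c..d} (\<lambda>s. g s / (s - x))"
      by (simp only: integral_mult_right)
    finally show ?thesis .
  qed
  show ?thesis
    unfolding pv_trunc_def using x e
    by (simp add: piece algebra_simps)
qed

lemma pv_trunc_sum:
  assumes "finite J" and g: "\<And>j. j \<in> J \<Longrightarrow> continuous_on {-1..1} (g j)"
    and D: "\<And>s. s \<in> {-1..1} \<Longrightarrow> D s = (\<Sum>j\<in>J. c j * g j s)"
    and x: "\<bar>x\<bar> < 1" and e: "0 < e"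
  shows "pv_trunc D x e = (\<Sum>j\<in>J. c j * pv_trunc (g j) x e)"
  using assms(1) g D
proof (induction J arbitrary: D rule: finite_induct)
  case empty
  then have "pv_trunc D x e = 0 * pv_trunc (\<lambda>_. 0) x e + 0 * pv_trunc (\<lambda>_. 0) x e"
    by (intro pv_trunc_linear x e) auto
  then show ?case by simp
next
  case (insert i J)
  define R where "R = (\<lambda>s. \<Sum>j\<in>J. c j * g j s)"
  have "continuous_on {-1..1} R"
    unfolding R_def using insert.prems(1) by (intro continuous_intros) auto
  then have "pv_trunc D x e = c i * pv_trunc (g i) x e + 1 * pv_trunc R x e"
    using insert by (intro pv_trunc_linear x e) (auto simp: R_def)
  also have "pv_trunc R x e = (\<Sum>j\<in>J. c j * pv_trunc (g j) x e)"
    using insert by (intro insert.IH) (auto simp: R_def)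
  finally show ?case
    using insert.hyps by simp
qed

lemma cpv_sum_eq:
  assumes "finite J" "\<And>j. j \<in> J \<Longrightarrow> continuous_on {-1..1} (g j)"
    and "\<And>s. s \<in> {-1..1} \<Longrightarrow> D s = (\<Sum>j\<in>J. c j * g j s)"
    and "\<bar>x\<bar> < 1" and "\<And>j. j \<in> J \<Longrightarrow> (pv_trunc (g j) x \<longlongrightarrow> L j) (at_right 0)"
  shows "cpv D x = (\<Sum>j\<in>J. c j * L j)"
proof (rule cpv_eqI)
  have "((\<lambda>e. \<Sum>j\<in>J. c j * pv_trunc (g j) x e) \<longlongrightarrow> (\<Sum>j\<in>J. c j * L j)) (at_right 0)"
    using assms(5) by (intro tendsto_intros)
  moreover have "\<forall>\<^sub>F e in at_right 0. (\<Sum>j\<in>J. c j * pv_trunc (g j) x e) = pv_trunc D x e"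
    using eventually_at_right_less by (rule eventually_mono) (rule pv_trunc_sum[OF assms(1-4), symmetric])
  ultimately show "(pv_trunc D x \<longlongrightarrow> (\<Sum>j\<in>J. c j * L j)) (at_right 0)"
    by (rule Lim_transform_eventually)
qed

lemma pv_trunc_sub_mult_tendsto:
  assumes h: "continuous_on {-1..1} h" and x: "\<bar>x\<bar> < 1"
  shows "(pv_trunc (\<lambda>s. (s - x) * h s) x \<longlongrightarrow> integral {-1..1} h) (at_right 0)"
proof -
  have hi: "h integrable_on {-1..1}"
    using h by (rule integrable_continuous_interval)
  have x_in: "x \<in> interior {-1..1::real}"
    using x by (auto simp: abs_less_iff)
  have left: "isCont (\<lambda>y. integral {-1..y} h) x"
    by (rule continuous_on_interior[OF indefinite_integral_continuous_1[OF hi] x_in])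
  have right: "isCont (\<lambda>y. integral {y..1} h) x"
    by (rule continuous_on_interior[OF indefinite_integral_continuous_1'[OF hi] x_in])
  have "((\<lambda>e. integral {-1..x - e} h + integral {x + e..1} h)
      \<longlongrightarrow> integral {-1..x} h + integral {x..1} h) (at_right 0)"
    by (intro tendsto_add isCont_tendsto_compose[OF left] isCont_tendsto_compose[OF right]
        tendsto_eq_intros) auto
  also have "integral {-1..x} h + integral {x..1} h = integral {-1..1} h"
    using x hi by (intro Henstock_Kurzweil_Integration.integral_combine) auto
  finally show ?thesis
  proof (rule Lim_transform_eventually)
    show "\<forall>\<^sub>F e in at_right 0. integral {-1..x - e} h + integral {x + e..1} h
        = pv_trunc (\<lambda>s. (s - x) * h s) x e"
      using eventually_at_right_less
      by (rule eventually_mono) (auto simp: pv_trunc_def intro!: integral_cong arg_cong2[where f="(+)"])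
  qed
qed

lemma one_sub_mult_add_sqrt_pos:
  fixes x s :: real
  assumes "\<bar>x\<bar> < 1" "\<bar>s\<bar> \<le> 1"
  shows "0 < 1 - x * s + sqrt (1 - x\<^sup>2) * sqrt (1 - s\<^sup>2)"
proof -
  have "\<bar>x * s\<bar> \<le> \<bar>x\<bar>"
    using assms by (simp add: abs_mult mult_left_le)
  moreover have "0 \<le> sqrt (1 - x\<^sup>2) * sqrt (1 - s\<^sup>2)"
    using assms by (simp add: abs_square_le_1 less_imp_le)
  ultimately show ?thesis
    using assms(1) by linarith
qed

(* A primitive of (sqrt (1 - s^2) - sqrt (1 - x^2)) / (s - x) on [-1, 1]; subtracting the value
   of the numerator at s = x leaves a bounded integrand. *)
definition sqrt_pv_primitive :: "real \<Rightarrow> real \<Rightarrow> real" where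
  "sqrt_pv_primitive x s = sqrt (1 - s\<^sup>2) - x * arcsin s
     - sqrt (1 - x\<^sup>2) * ln (1 - x * s + sqrt (1 - x\<^sup>2) * sqrt (1 - s\<^sup>2))"

lemma continuous_on_sqrt_pv_primitive:
  assumes "\<bar>x\<bar> < 1"
  shows "continuous_on {-1..1} (sqrt_pv_primitive x)"
  unfolding sqrt_pv_primitive_def
  using one_sub_mult_add_sqrt_pos[OF assms]
  by (intro continuous_intros) (auto simp: less_imp_neq[symmetric])

lemma sqrt_pv_primitive_derivative_eq:
  fixes s x t w :: real
  assumes t: "0 < t" "t * t = 1 - s\<^sup>2" and w: "w * w = 1 - x\<^sup>2" and sx: "s \<noteq> x"
    and N: "0 < 1 - x * s + w * t"
  shows "- s / t - x * (1 / t) - w * ((- x - w * s / t) / (1 - x * s + w * t)) = (t - w) / (s - x)"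
proof -
  define N where "N = 1 - x * s + w * t"
  have N_pos: "0 < N"
    using N by (simp add: N_def)
  have "(x * t + w * s) * (s - x) - N * (w - t) = t * (1 - x\<^sup>2 - w * w) - w * (1 - s\<^sup>2 - t * t)"
    unfolding N_def by (simp add: algebra_simps power2_eq_square)
  then have key: "x * t + w * s = N * (w - t) / (s - x)"
    using t w sx by (simp add: field_simps)
  have "- s / t - x * (1 / t) - w * ((- x - w * s / t) / N)
      = (w * (x * t + w * s) - (s + x) * N) / (t * N)"
    using t N_pos by (simp add: field_simps)
  also have "\<dots> = (w * (w - t) - (s + x) * (s - x)) / (t * (s - x))"
    unfolding key using t N_pos sx by (simp add: field_simps)
  also have "w * (w - t) - (s + x) * (s - x) = t * (t - w)"
    using t w by (simp add: algebra_simps power2_eq_square)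
  finally show ?thesis
    using t unfolding N_def by simp
qed

lemma sqrt_pv_primitive_has_derivative:
  fixes x s :: real
  assumes x: "\<bar>x\<bar> < 1" and s: "-1 < s" "s < 1" "s \<noteq> x"
  shows "(sqrt_pv_primitive x has_real_derivative
           (sin (arccos s) - sqrt (1 - x\<^sup>2)) / (s - x)) (at s)"
proof -
  define w where "w = sqrt (1 - x\<^sup>2)"
  define t where "t = sqrt (1 - s\<^sup>2)"
  have s2: "s\<^sup>2 < 1" using s by (simp add: abs_square_less_1)
  have t: "t > 0" "t * t = 1 - s\<^sup>2"
    unfolding t_def using s2 by simp_all
  have w: "w * w = 1 - x\<^sup>2"
    unfolding w_def using x by (simp add: abs_square_less_1 less_imp_le)
  have N: "0 < 1 - x * s + w * t"
    unfolding w_def t_def using x s by (intro one_sub_mult_add_sqrt_pos) auto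
  have d_sqrt: "((\<lambda>s. sqrt (1 - s\<^sup>2)) has_real_derivative - s / t) (at s)"
    using s2 unfolding t_def
    by (auto intro!: derivative_eq_intros simp: field_simps)
  have d_arcsin: "(arcsin has_real_derivative 1 / t) (at s)"
    using DERIV_arcsin[OF s(1,2)] unfolding t_def by (simp add: divide_inverse)
  have d_ln: "((\<lambda>s. ln (1 - x * s + w * sqrt (1 - s\<^sup>2))) has_real_derivative
      (- x - w * s / t) / (1 - x * s + w * t)) (at s)"
    using N s2 unfolding t_def
    by (auto intro!: derivative_eq_intros d_sqrt[unfolded t_def] simp: field_simps)
  have "(sqrt_pv_primitive x has_real_derivative
      - s / t - x * (1 / t) - w * ((- x - w * s / t) / (1 - x * s + w * t))) (at s)"
    unfolding sqrt_pv_primitive_def w_def[symmetric]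
    by (intro DERIV_diff DERIV_cmult d_sqrt d_arcsin d_ln)
  moreover have "sin (arccos s) = t"
    unfolding t_def using s by (simp add: sin_arccos)
  ultimately show ?thesis
    unfolding w_def[symmetric] sqrt_pv_primitive_derivative_eq[OF t w s(3) N] by simp
qed

lemma has_integral_div_sub_primitive:
  fixes F D L :: "real \<Rightarrow> real"
  assumes ab: "-1 \<le> a" "a \<le> b" "b \<le> 1" "x \<notin> {a..b}"
    and F: "continuous_on {-1..1} F"
    and F': "\<And>s. -1 < s \<Longrightarrow> s < 1 \<Longrightarrow> s \<noteq> x \<Longrightarrow>
               (F has_real_derivative (D s - c) / (s - x)) (at s)"
    and L: "continuous_on {a..b} L"
    and L': "\<And>s. a < s \<Longrightarrow> s < b \<Longrightarrow> (L has_real_derivative 1 / (s - x)) (at s)"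
  shows "((\<lambda>s. D s / (s - x)) has_integral (F b + c * L b) - (F a + c * L a)) {a..b}"
proof (rule fundamental_theorem_of_calculus_interior[OF ab(2)])
  show "continuous_on {a..b} (\<lambda>s. F s + c * L s)"
    using ab by (intro continuous_intros continuous_on_subset[OF F] L) auto
  fix s assume s: "s \<in> {a<..<b}"
  then have "((\<lambda>s. F s + c * L s) has_real_derivative (D s - c) / (s - x) + c * (1 / (s - x))) (at s)"
    using ab by (intro DERIV_add DERIV_cmult F' L') auto
  then show "((\<lambda>s. F s + c * L s) has_vector_derivative D s / (s - x)) (at s)"
    by (simp add: has_real_derivative_iff_has_vector_derivative[symmetric] diff_divide_distrib)
qed

lemma pv_trunc_eq_primitive:
  fixes F D :: "real \<Rightarrow> real"
  assumes x: "\<bar>x\<bar> < 1" and e: "0 < e" "e < 1 - \<bar>x\<bar>"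
    and F: "continuous_on {-1..1} F"
    and F': "\<And>s. -1 < s \<Longrightarrow> s < 1 \<Longrightarrow> s \<noteq> x \<Longrightarrow>
               (F has_real_derivative (D s - c) / (s - x)) (at s)"
  shows "pv_trunc D x e = F (x - e) - F (x + e) + F 1 - F (-1) + c * (ln (1 - x) - ln (1 + x))"
proof -
  have "((\<lambda>s. D s / (s - x)) has_integral
      (F (x - e) + c * ln (x - (x - e))) - (F (-1) + c * ln (x - -1))) {-1..x - e}"
  proof (rule has_integral_div_sub_primitive[OF _ _ _ _ F F'])
    show "continuous_on {-1..x - e} (\<lambda>s. ln (x - s))"
      using e by (intro continuous_intros) auto
    fix s assume "-1 < s" "s < x - e"
    then have "((\<lambda>s. ln (x - s)) has_real_derivative 1 / (x - s) * (0 - 1)) (at s)"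
      using e by (intro DERIV_chain2[OF DERIV_ln_divide] derivative_eq_intros) auto
    moreover have "1 / (x - s) * (0 - 1) = 1 / (s - x)"
      by (metis divide_minus_right minus_diff_eq mult_minus1_right diff_0 mult_1_right divide_inverse)
    ultimately show "((\<lambda>s. ln (x - s)) has_real_derivative 1 / (s - x)) (at s)"
      by simp
  qed (use e x in auto)
  moreover have "((\<lambda>s. D s / (s - x)) has_integral
      (F 1 + c * ln (1 - x)) - (F (x + e) + c * ln (x + e - x))) {x + e..1}"
  proof (rule has_integral_div_sub_primitive[OF _ _ _ _ F F'])
    show "continuous_on {x + e..1} (\<lambda>s. ln (s - x))"
      using e by (intro continuous_intros) auto
    fix s assume "x + e < s" "s < 1"
    then show "((\<lambda>s. ln (s - x)) has_real_derivative 1 / (s - x)) (at s)"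
      using e by (intro DERIV_chain2[OF DERIV_ln_divide, where g = "\<lambda>s. s - x", simplified]
        derivative_eq_intros) auto
  qed (use e x in auto)
  ultimately show ?thesis
    unfolding pv_trunc_def by (simp add: integral_unique algebra_simps)
qed

lemma pv_trunc_tendsto_primitive:
  fixes F D :: "real \<Rightarrow> real"
  assumes x: "\<bar>x\<bar> < 1" and F: "continuous_on {-1..1} F"
    and F': "\<And>s. -1 < s \<Longrightarrow> s < 1 \<Longrightarrow> s \<noteq> x \<Longrightarrow>
               (F has_real_derivative (D s - c) / (s - x)) (at s)"
  shows "(pv_trunc D x \<longlongrightarrow> F 1 - F (-1) + c * (ln (1 - x) - ln (1 + x))) (at_right 0)"
proof -
  have "isCont F x"
    using continuous_on_interior[OF F] x by (auto simp: abs_less_iff)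
  then have "((\<lambda>e. F (x - e) - F (x + e) + F 1 - F (-1) + c * (ln (1 - x) - ln (1 + x)))
      \<longlongrightarrow> F x - F x + F 1 - F (-1) + c * (ln (1 - x) - ln (1 + x))) (at_right 0)"
    by (intro tendsto_intros isCont_tendsto_compose[where g = F] tendsto_eq_intros) auto
  then have "((\<lambda>e. F (x - e) - F (x + e) + F 1 - F (-1) + c * (ln (1 - x) - ln (1 + x)))
      \<longlongrightarrow> F 1 - F (-1) + c * (ln (1 - x) - ln (1 + x))) (at_right 0)"
    by simp
  moreover have "\<forall>\<^sub>F e in at_right 0.
      F (x - e) - F (x + e) + F 1 - F (-1) + c * (ln (1 - x) - ln (1 + x)) = pv_trunc D x e"
    unfolding eventually_at_right_field using x
    by (intro exI[of _ "1 - \<bar>x\<bar>"]) (auto simp: pv_trunc_eq_primitive[OF x _ _ F F'])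
  ultimately show ?thesis
    by (rule Lim_transform_eventually)
qed

lemma pv_trunc_sin_arccos_tendsto:
  assumes x: "\<bar>x\<bar> < 1"
  shows "(pv_trunc (\<lambda>s. sin (arccos s)) x \<longlongrightarrow> - pi * x) (at_right 0)"
proof -
  have "(pv_trunc (\<lambda>s. sin (arccos s)) x \<longlongrightarrow>
      sqrt_pv_primitive x 1 - sqrt_pv_primitive x (-1)
      + sqrt (1 - x\<^sup>2) * (ln (1 - x) - ln (1 + x))) (at_right 0)"
    using x continuous_on_sqrt_pv_primitive[OF x] sqrt_pv_primitive_has_derivative[OF x]
    by (rule pv_trunc_tendsto_primitive)
  also have "sqrt_pv_primitive x 1 - sqrt_pv_primitive x (-1)
      + sqrt (1 - x\<^sup>2) * (ln (1 - x) - ln (1 + x)) = - pi * x"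
    unfolding sqrt_pv_primitive_def by (simp add: algebra_simps)
  finally show ?thesis .
qed

lemma has_integral_comp_arccos:
  fixes f G :: "real \<Rightarrow> real"
  assumes G: "\<And>t. (G has_real_derivative - f t * sin t) (at t)"
  shows "((\<lambda>s. f (arccos s)) has_integral G 0 - G pi) {-1..1}"
proof -
  have "((\<lambda>s. f (arccos s)) has_integral G (arccos 1) - G (arccos (-1))) {-1..1}"
  proof (rule fundamental_theorem_of_calculus_interior)
    have "continuous_on UNIV G"
      using G by (meson DERIV_isCont continuous_at_imp_continuous_on)
    then show "continuous_on {-1..1} (\<lambda>s. G (arccos s))"
      by (rule continuous_on_compose2[OF _ continuous_on_arccos']) auto
    fix s :: real
    assume s: "s \<in> {-1<..<1}"
    then have "((\<lambda>s. G (arccos s)) has_real_derivative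
        (- f (arccos s) * sin (arccos s)) * inverse (- sqrt (1 - s\<^sup>2))) (at s)"
      by (intro DERIV_chain2[OF G DERIV_arccos]) auto
    moreover have "s\<^sup>2 < 1"
      using s by (simp add: abs_square_less_1 abs_less_iff)
    moreover have "sin (arccos s) = sqrt (1 - s\<^sup>2)"
      using s by (simp add: sin_arccos)
    ultimately show "((\<lambda>s. G (arccos s)) has_vector_derivative f (arccos s)) (at s)"
      by (simp add: has_real_derivative_iff_has_vector_derivative[symmetric] field_simps)
  qed simp
  then show ?thesis by simp
qed

lemma has_integral_sin_mult_arccos:
  "((\<lambda>s. sin (real k * arccos s)) has_integral (if k = 1 then pi / 2 else 0)) {-1..1}"
proof (cases "k = 1")
  case True
  define G where "G t = (sin (2 * t) / 2 - t) / 2" for t :: real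
  have "(G has_real_derivative - sin (1 * t) * sin t) (at t)" for t
  proof -
    have "(G has_real_derivative (cos (2 * t) - 1) / 2) (at t)"
      unfolding G_def by (auto intro!: derivative_eq_intros)
    then show ?thesis
      by (simp add: cos_double_sin power2_eq_square)
  qed
  from has_integral_comp_arccos[OF this] True show ?thesis
    by (simp add: G_def)
next
  case False
  then have k: "real k - 1 \<noteq> 0" "real k + 1 \<noteq> 0"
    by auto
  define G where
    "G t = (sin ((real k + 1) * t) / (real k + 1) - sin ((real k - 1) * t) / (real k - 1)) / 2"
    for t :: real
  have "(G has_real_derivative - sin (real k * t) * sin t) (at t)" for t
  proof -
    have "(G has_real_derivative (cos ((real k + 1) * t) - cos ((real k - 1) * t)) / 2) (at t)"
      unfolding G_def using k by (auto intro!: derivative_eq_intros)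
    moreover have "cos ((real k + 1) * t) = cos (real k * t + t)"
      "cos ((real k - 1) * t) = cos (real k * t - t)"
      by (simp_all add: algebra_simps)
    ultimately show ?thesis
      by (simp add: cos_add cos_diff mult.commute)
  qed
  from has_integral_comp_arccos[OF this] False show ?thesis
    by (simp add: G_def algebra_simps)
qed

lemma chebT_Suc_Suc:
  assumes "\<bar>x\<bar> \<le> 1"
  shows "chebT (Suc (Suc k)) x = 2 * x * chebT (Suc k) x - chebT k x"
proof -
  define a where "a = arccos x"
  have "cos (real (Suc (Suc k)) * a) + cos (real k * a) = 2 * cos a * cos (real (Suc k) * a)"
    using cos_add[of "real (Suc k) * a" a] cos_diff[of "real (Suc k) * a" a]
    by (simp add: algebra_simps)
  moreover have "cos a = x"
    unfolding a_def using assms by simp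
  ultimately show ?thesis
    unfolding chebT_def a_def[symmetric] by simp
qed

lemma sin_Suc_Suc_mult_arccos:
  assumes "\<bar>s\<bar> \<le> 1"
  shows "sin (real (Suc (Suc k)) * arccos s)
    = 2 * s * sin (real (Suc k) * arccos s) - sin (real k * arccos s)"
proof -
  define a where "a = arccos s"
  have "sin (real (Suc (Suc k)) * a) + sin (real k * a) = 2 * cos a * sin (real (Suc k) * a)"
    using sin_add[of "real (Suc k) * a" a] sin_diff[of "real (Suc k) * a" a]
    by (simp add: algebra_simps)
  moreover have "cos a = s"
    unfolding a_def using assms by simp
  ultimately show ?thesis
    unfolding a_def[symmetric] by simp
qed

lemma continuous_on_sin_mult_arccos: "continuous_on {-1..1} (\<lambda>s. sin (c * arccos s))"
  by (intro continuous_intros) auto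

lemma pv_trunc_sin_mult_arccos_rec:
  assumes x: "\<bar>x\<bar> < 1" and e: "0 < e"
  shows "pv_trunc (\<lambda>s. sin (real (Suc (Suc k)) * arccos s)) x e
    = 2 * x * pv_trunc (\<lambda>s. sin (real (Suc k) * arccos s)) x e
      - pv_trunc (\<lambda>s. sin (real k * arccos s)) x e
      + 2 * pv_trunc (\<lambda>s. (s - x) * sin (real (Suc k) * arccos s)) x e"
proof -
  let ?g = "\<lambda>k s. sin (real k * arccos s)"
  have cont: "continuous_on {-1..1} (\<lambda>s. p s * ?g k s)" if "continuous_on {-1..1} p" for p k
    using that continuous_on_sin_mult_arccos by (rule continuous_on_mult)
  have "pv_trunc (?g (Suc (Suc k))) x e
      = 2 * pv_trunc (\<lambda>s. s * ?g (Suc k) s) x e + (-1) * pv_trunc (?g k) x e"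
    using x e
    by (intro pv_trunc_linear cont continuous_on_sin_mult_arccos continuous_intros)
       (subst sin_Suc_Suc_mult_arccos, auto simp: abs_le_iff)
  also have "pv_trunc (\<lambda>s. s * ?g (Suc k) s) x e
      = x * pv_trunc (?g (Suc k)) x e + 1 * pv_trunc (\<lambda>s. (s - x) * ?g (Suc k) s) x e"
    using x e
    by (intro pv_trunc_linear cont continuous_on_sin_mult_arccos continuous_intros)
       (simp add: algebra_simps)
  finally show ?thesis
    by (simp add: algebra_simps)
qed

lemma pv_trunc_sin_mult_arccos_tendsto:
  assumes x: "\<bar>x\<bar> < 1"
  shows "(pv_trunc (\<lambda>s. sin (real k * arccos s)) x \<longlongrightarrow>
           (if k = 0 then 0 else - pi * chebT k x)) (at_right 0)"
proof (induction k rule: induct_nat_012)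
  case 0
  then show ?case
    by (simp add: pv_trunc_def)
next
  case 1
  then show ?case
    using pv_trunc_sin_arccos_tendsto[OF x] x by (simp add: chebT_def)
next
  case (ge2 k)
  let ?L = "\<lambda>k. if k = 0 then 0 else - pi * chebT k x"
  have "((\<lambda>e. 2 * x * pv_trunc (\<lambda>s. sin (real (Suc k) * arccos s)) x e
        - pv_trunc (\<lambda>s. sin (real k * arccos s)) x e
        + 2 * pv_trunc (\<lambda>s. (s - x) * sin (real (Suc k) * arccos s)) x e)
      \<longlongrightarrow> 2 * x * ?L (Suc k) - ?L k
          + 2 * integral {-1..1} (\<lambda>s. sin (real (Suc k) * arccos s))) (at_right 0)"
    using ge2.IH x continuous_on_sin_mult_arccos
    by (intro tendsto_intros pv_trunc_sub_mult_tendsto)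
  moreover have "integral {-1..1} (\<lambda>s. sin (real (Suc k) * arccos s)) = (if k = 0 then pi / 2 else 0)"
    using has_integral_sin_mult_arccos by (rule integral_unique[THEN trans]) simp
  moreover have "2 * x * ?L (Suc k) - ?L k + 2 * (if k = 0 then pi / 2 else 0) = ?L (Suc (Suc k))"
  proof -
    have "chebT 0 x = 1" "chebT (Suc 0) x = x" "\<bar>x\<bar> \<le> 1"
      using x by (simp_all add: chebT_def)
    then show ?thesis
      by (cases "k = 0") (simp_all add: chebT_Suc_Suc algebra_simps)
  qed
  moreover have "\<forall>\<^sub>F e in at_right 0. 2 * x * pv_trunc (\<lambda>s. sin (real (Suc k) * arccos s)) x e
        - pv_trunc (\<lambda>s. sin (real k * arccos s)) x e
        + 2 * pv_trunc (\<lambda>s. (s - x) * sin (real (Suc k) * arccos s)) x e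
      = pv_trunc (\<lambda>s. sin (real (Suc (Suc k)) * arccos s)) x e"
    using eventually_at_right_less
    by (rule eventually_mono) (rule pv_trunc_sin_mult_arccos_rec[OF x, symmetric])
  ultimately show ?case
    using Lim_transform_eventually by fastforce
qed

lemma sin_arccos_sqrt_pos:
  assumes "\<bar>y\<bar> < 1"
  shows "sin (arccos y) = sqrt (1 - y\<^sup>2)" "0 < sqrt (1 - y\<^sup>2)"
  using assms by (simp_all add: sin_arccos abs_square_less_1 abs_le_iff)

lemma chebT_has_real_derivative:
  assumes y: "\<bar>y\<bar> < 1" and k: "k \<ge> 1"
  shows "(chebT k has_real_derivative real k * chebU (k - 1) y) (at y)"
proof -
  have "((\<lambda>y. cos (real k * arccos y)) has_real_derivative
      - sin (real k * arccos y) * (real k * inverse (- sqrt (1 - y\<^sup>2)))) (at y)"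
    using y by (intro DERIV_chain2[OF DERIV_cos] DERIV_cmult DERIV_arccos) auto
  moreover have "real (k - 1) + 1 = real k"
    using k by simp
  ultimately show ?thesis
    unfolding chebT_def[abs_def] chebU_def using sin_arccos_sqrt_pos[OF y]
    by (simp add: field_simps)
qed

lemma chebU_has_real_derivative:
  assumes y: "\<bar>y\<bar> < 1"
  shows "(chebU k has_real_derivative
           (y * chebU k y - real (Suc k) * chebT (Suc k) y) / (1 - y\<^sup>2)) (at y)"
proof -
  define A where "A = real k + 1"
  define t where "t = sqrt (1 - y\<^sup>2)"
  have t: "sin (arccos y) = t" "0 < t" "t * t = 1 - y\<^sup>2"
    unfolding t_def using sin_arccos_sqrt_pos[OF y] by auto
  have "((\<lambda>y. sin (A * arccos y) / sin (arccos y)) has_real_derivative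
      (cos (A * arccos y) * (A * inverse (- sqrt (1 - y\<^sup>2))) * sin (arccos y)
       - sin (A * arccos y) * (cos (arccos y) * inverse (- sqrt (1 - y\<^sup>2))))
      / (sin (arccos y) * sin (arccos y))) (at y)"
    using y t
    by (intro DERIV_divide DERIV_chain2[OF DERIV_sin] DERIV_cmult DERIV_arccos) auto
  moreover have "cos (arccos y) = y"
    using y by simp
  ultimately show ?thesis
    unfolding chebU_def[abs_def] chebT_def A_def[symmetric] t(1) t_def[symmetric] t(3)[symmetric]
    using t(2)
    by (simp add: A_def field_simps)
qed

lemma chebU_Suc_add:
  assumes "\<bar>y\<bar> < 1"
  shows "chebU (Suc k) y = y * chebU k y + chebT (Suc k) y"
proof -
  define a where "a = arccos y"
  have "sin (real (Suc k) * a + a) = sin (real (Suc k) * a) * y + cos (real (Suc k) * a) * sin a"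
    unfolding a_def using assms by (simp add: sin_add)
  moreover have "sin a \<noteq> 0"
    unfolding a_def using sin_arccos_sqrt_pos[OF assms] by simp
  ultimately show ?thesis
    unfolding chebU_def chebT_def a_def[symmetric] by (simp add: field_simps)
qed

lemma chebU_Suc_sub:
  assumes "\<bar>y\<bar> < 1"
  shows "chebU k y = y * chebU (Suc k) y - chebT (Suc (Suc k)) y"
proof -
  define a where "a = arccos y"
  have "sin (real (Suc (Suc k)) * a - a)
      = sin (real (Suc (Suc k)) * a) * y - cos (real (Suc (Suc k)) * a) * sin a"
    unfolding a_def using assms by (simp add: sin_diff)
  moreover have "sin a \<noteq> 0"
    unfolding a_def using sin_arccos_sqrt_pos[OF assms] by simp
  ultimately show ?thesis
    unfolding chebU_def chebT_def a_def[symmetric] by (simp add: field_simps)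
qed

lemma chebT_deriv_has_real_derivative:
  assumes y: "\<bar>y\<bar> < 1" and k: "k \<ge> 2"
  shows "((\<lambda>y. real k * chebU (k - 1) y) has_real_derivative
           real k * ((real k + 1) * chebU (k - 2) y - (real k - 1) * chebU k y) / (2 * (1 - y\<^sup>2)))
         (at y)"
proof -
  obtain i where i: "k = Suc (Suc i)"
    using k by (metis add_2_eq_Suc le_Suc_ex)
  have comb: "(real k + 1) * chebU (k - 2) y - (real k - 1) * chebU k y
      = 2 * (y * chebU (k - 1) y - real k * chebT k y)"
  proof -
    have U: "chebU i y = y * chebU (Suc i) y - chebT (Suc (Suc i)) y"
      "chebU (Suc (Suc i)) y = y * chebU (Suc i) y + chebT (Suc (Suc i)) y"
      using chebU_Suc_sub[OF y] chebU_Suc_add[OF y] by blast+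
    show ?thesis
      unfolding i by (simp add: U algebra_simps)
  qed
  have halve: "c * (X / Z) = c * (2 * X) / (2 * Z)" for c X Z :: real
    by simp
  have d: "(chebU (k - 1) has_real_derivative
      (y * chebU (k - 1) y - real k * chebT k y) / (1 - y\<^sup>2)) (at y)"
    using chebU_has_real_derivative[OF y, of "Suc i"] by (simp add: i)
  show ?thesis
    using DERIV_cmult[OF d, of "real k"] unfolding halve[of "real k"] comb[symmetric] .
qed

lemma hadamard_fp_3_eqI:
  assumes cpv: "\<And>y. \<bar>y\<bar> < 1 \<Longrightarrow> cpv D y = F y"
    and F': "\<And>y. \<bar>y\<bar> < 1 \<Longrightarrow> (F has_real_derivative F' y) (at y)"
    and F'': "\<And>y. \<bar>y\<bar> < 1 \<Longrightarrow> (F' has_real_derivative F'' y) (at y)"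
    and r: "\<bar>r\<bar> < 1"
  shows "hadamard_fp D 3 r = F'' r / 2"
proof -
  have near: "\<forall>\<^sub>F z in nhds y. \<bar>z\<bar> < 1" if "\<bar>y\<bar> < 1" for y :: real
  proof -
    have "\<forall>\<^sub>F z in nhds y. z \<in> {-1<..<1}"
      using that by (intro eventually_nhds_in_open) (auto simp: abs_less_iff)
    then show ?thesis
      by (rule eventually_mono) (auto simp: abs_less_iff)
  qed
  have "hadamard_fp D 2 y = F' y" if y: "\<bar>y\<bar> < 1" for y
  proof -
    have "hadamard_fp D (Suc 0) = cpv D"
      by (rule ext) simp
    then have "hadamard_fp D 2 y = deriv (cpv D) y"
      by (simp add: numeral_2_eq_2)
    also have "\<dots> = deriv F y"
      using near[OF y] by (intro deriv_cong_ev) (auto elim!: eventually_mono simp: cpv)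
    also have "\<dots> = F' y"
      using F'[OF y] by (rule DERIV_imp_deriv)
    finally show ?thesis .
  qed
  then have "deriv (hadamard_fp D 2) r = deriv F' r"
    using near[OF r] by (intro deriv_cong_ev) (auto elim!: eventually_mono)
  also have "\<dots> = F'' r"
    using F''[OF r] by (rule DERIV_imp_deriv)
  moreover have "hadamard_fp D 3 r = deriv (hadamard_fp D 2) r / 2"
    by (simp add: numeral_3_eq_3 numeral_2_eq_2)
  ultimately show ?thesis
    by simp
qed

lemma cpv_chebT_mult_weight:
  assumes m: "m \<ge> 1" and n: "2 * m \<le> n" and y: "\<bar>y\<bar> < 1"
  shows "cpv (\<lambda>s. chebT n s * (1 - s\<^sup>2) powr (real m - 1/2)) y =
    (-1)^(m + 1) * pi / 2^(2 * m - 1) *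
    (\<Sum>j = 0..2 * m - 1. (-1)^j * real ((2 * m - 1) choose j) * chebT (n + 1 - 2 * m + 2 * j) y)"
proof -
  define a where "a j = (-1)^m / 2^(2 * m - 1) * ((-1)^j * real ((2 * m - 1) choose j))" for j
  have "cpv (\<lambda>s. chebT n s * (1 - s\<^sup>2) powr (real m - 1/2)) y
      = (\<Sum>j = 0..2 * m - 1. a j * (- pi * chebT (n + 1 - 2 * m + 2 * j) y))"
  proof (rule cpv_sum_eq[OF _ _ _ y])
    show "chebT n s * (1 - s\<^sup>2) powr (real m - 1/2)
        = (\<Sum>j = 0..2 * m - 1. a j * sin (real (n + 1 - 2 * m + 2 * j) * arccos s))"
      if "s \<in> {-1..1}" for s
      using m n that unfolding a_def
      by (subst chebT_mult_weight_expansion) (auto simp: sum_distrib_left mult.assoc)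
    show "(pv_trunc (\<lambda>s. sin (real (n + 1 - 2 * m + 2 * j) * arccos s)) y
        \<longlongrightarrow> - pi * chebT (n + 1 - 2 * m + 2 * j) y) (at_right 0)" for j
      using pv_trunc_sin_mult_arccos_tendsto[OF y, of "n + 1 - 2 * m + 2 * j"] n by simp
  qed (auto simp: continuous_on_sin_mult_arccos)
  then show ?thesis
    unfolding a_def by (simp add: sum_distrib_left mult_ac)
qed

lemma hadamard_fp_3_eq_chebT_sum:
  assumes "finite J" and k: "\<And>j. j \<in> J \<Longrightarrow> k j \<ge> 2"
    and cpv: "\<And>y. \<bar>y\<bar> < 1 \<Longrightarrow> cpv D y = (\<Sum>j\<in>J. b j * chebT (k j) y)"
    and r: "\<bar>r\<bar> < 1"
  shows "hadamard_fp D 3 r = (\<Sum>j\<in>J. b j * real (k j) *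
    ((real (k j) + 1) * chebU (k j - 2) r - (real (k j) - 1) * chebU (k j) r)) / (4 * (1 - r\<^sup>2))"
proof -
  have "hadamard_fp D 3 r = (\<Sum>j\<in>J. b j * (real (k j) *
      ((real (k j) + 1) * chebU (k j - 2) r - (real (k j) - 1) * chebU (k j) r) / (2 * (1 - r\<^sup>2)))) / 2"
  proof (rule hadamard_fp_3_eqI[OF cpv _ _ r])
    fix y :: real
    assume y: "\<bar>y\<bar> < 1"
    show "((\<lambda>y. \<Sum>j\<in>J. b j * chebT (k j) y) has_real_derivative
        (\<Sum>j\<in>J. b j * (real (k j) * chebU (k j - 1) y))) (at y)"
      using k by (intro DERIV_sum DERIV_cmult chebT_has_real_derivative y) (auto intro: order_trans[of _ 2])
    show "((\<lambda>y. \<Sum>j\<in>J. b j * (real (k j) * chebU (k j - 1) y)) has_real_derivative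
        (\<Sum>j\<in>J. b j * (real (k j) * ((real (k j) + 1) * chebU (k j - 2) y
          - (real (k j) - 1) * chebU (k j) y) / (2 * (1 - y\<^sup>2))))) (at y)"
      using k by (intro DERIV_sum DERIV_cmult chebT_deriv_has_real_derivative y)
  qed
  then show ?thesis
    by (simp add: sum_distrib_left sum_divide_distrib mult_ac)
qed

theorem mainTheorem5:
  fixes m n :: nat and r :: real
  assumes "m \<ge> 1" and "n \<ge> 2 * m + 2" and "\<bar>r\<bar> < 1"
  shows "hadamard_fp (\<lambda>s. chebT n s * (1 - s\<^sup>2) powr (real m - 1/2)) 3 r =
    (-1) ^ (m + 1) * (1/2) ^ (2 * m + 1) * (pi / (1 - r\<^sup>2)) *
    (\<Sum>j = 0..2 * m - 1. (-1) ^ j * real ((2 * m - 1) choose j) *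
       (real n + 1 - 2 * real m + 2 * real j) *
       ((real n + 2 - 2 * real m + 2 * real j) * chebU (n - 1 - 2 * m + 2 * j) r
        - (real n - 2 * real m + 2 * real j) * chebU (n + 1 - 2 * m + 2 * j) r))"
proof -
  define k where "k j = n + 1 - 2 * m + 2 * j" for j
  define c where "c j = (-1)^j * real ((2 * m - 1) choose j)" for j
  define C where "C = (-1)^(m + 1) * pi / 2^(2 * m - 1)"
  have "cpv (\<lambda>s. chebT n s * (1 - s\<^sup>2) powr (real m - 1/2)) y
      = (\<Sum>j = 0..2 * m - 1. (C * c j) * chebT (k j) y)" if "\<bar>y\<bar> < 1" for y
    using cpv_chebT_mult_weight[OF assms(1) _ that] assms(2)
    unfolding C_def c_def k_def by (simp add: sum_distrib_left mult.assoc)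
  then have hfp: "hadamard_fp (\<lambda>s. chebT n s * (1 - s\<^sup>2) powr (real m - 1/2)) 3 r =
    (\<Sum>j = 0..2 * m - 1. (C * c j) * real (k j) *
       ((real (k j) + 1) * chebU (k j - 2) r - (real (k j) - 1) * chebU (k j) r)) / (4 * (1 - r\<^sup>2))"
    using assms by (intro hadamard_fp_3_eq_chebT_sum) (auto simp: k_def)
  have "C = 4 * ((-1) ^ (m + 1) * (1/2) ^ (2 * m + 1) * pi)"
    using assms(1) unfolding C_def by (cases m) (simp_all add: power_one_over)
  then have coeff: "C * a * K * Y / (4 * Z)
      = (-1) ^ (m + 1) * (1/2) ^ (2 * m + 1) * (pi / Z) * (a * K * Y)" for a K Y Z
    by (simp add: mult_ac)
  have "real (k j) = real n + 1 - 2 * real m + 2 * real j" "k j - 2 = n - 1 - 2 * m + 2 * j" for j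
    unfolding k_def using assms by (auto simp: of_nat_diff)
  then show ?thesis
    unfolding hfp sum_divide_distrib coeff sum_distrib_left[symmetric]
    by (simp add: c_def k_def algebra_simps)
qed

end
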